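(* Consider the linear model $y=\mathbf{x}\beta_o+\varepsilon$, where $\mathbf{x}$ is a random $1\times p$ row vector with $\mathbb{E}[\mathbf{x}]=0$, $y$ is a scalar and $\beta_o\in\mathbb{R}^p$ is nonrandom. Assume: (i) $\beta_o\in[-C_b,C_b]^p$ for a constant $0<C_b<\infty$ not depending on $p$; (ii) $\mathbb{E}[\varepsilon\mid\mathbf{x}]=0$ almost surely; (iii) there exist constants $B>0$ and $d>2$ such that, uniformly in $n$, $\mathbb{E}[|\varepsilon|^d\mid\mathbf{x}]\le B$ a.s., $\mathbb{E}[|\mathbf{x}\tau|^d]\le B$ and $B^{-1}\le\mathbb{E}[|\mathbf{x}\tau|^2]$ for all $\tau\in\mathcal{S}_p$. Then, for $m\in\mathcal{M}_k$, $\delta\in\Delta$, $Q_o(m\delta)=\widetilde{Q}_o(m\delta)+O(\|b_k\|/\sqrt{p})$, and $\widetilde{Q}_o(m\delta)$ is uniquely minimised (as a function of the product $m\delta$) at $m\delta=m_o\delta_o$.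
   Context: $\|\cdot\|$ is the Euclidean norm for vectors and the spectral norm for matrices; $\mathcal{S}_p=\{\tau\in\mathbb{R}^p:\|\tau\|=1\}$. $\mathcal{M}_k$ ($1\le k\le p$) is the set of $p\times k$ binary matrices each of whose rows has exactly one entry equal to $1$ (assignment of the $p$ coordinates to $k$ groups; column sums are group sizes); standing condition: group sizes induced by every $m\in\mathcal{M}_k$ are bounded above by a constant $M$ and away from zero uniformly in $p$. $\Delta\subset\mathbb{R}^k$. $(m_o,\delta_o)$ minimises $\|m\delta-\beta_o\|^2$ over $m\in\mathcal{M}_k,\delta\in\Delta$ (defined up to relabelling of groups), and $b_k:=\beta_o-m_o\delta_o$. $Q_o(m\delta):=\mathbb{E}[(y-\mathbf{x}m\delta)^2]/p$, $\sigma^2:=\mathbb{E}[\varepsilon^2]$, and $\widetilde{Q}_o(m\delta):=(m\delta-m_o\delta_o)'\mathbb{E}[\mathbf{x}'\mathbf{x}](m\delta-m_o\delta_o)/p+\sigma^2/p$. *)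

theory Defs
  imports "HOL-Probability.Probability"
begin

text \<open>Vectors in R^p are represented as functions nat => real, only indices i < p matter.
  A p x k matrix is a function nat => nat => real, with entries outside the index range zero.\<close>

definition vnorm :: "nat \<Rightarrow> (nat \<Rightarrow> real) \<Rightarrow> real" where
  "vnorm p v = sqrt (\<Sum>i<p. (v i)\<^sup>2)"

definition rowdot :: "nat \<Rightarrow> (nat \<Rightarrow> real) \<Rightarrow> (nat \<Rightarrow> real) \<Rightarrow> real" where
  "rowdot p x v = (\<Sum>i<p. x i * v i)"

definition matvec :: "nat \<Rightarrow> (nat \<Rightarrow> nat \<Rightarrow> real) \<Rightarrow> (nat \<Rightarrow> real) \<Rightarrow> (nat \<Rightarrow> real)" where
  "matvec k m \<delta> = (\<lambda>i. \<Sum>j<k. m i j * \<delta> j)"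

text \<open>The set M_k of p x k binary assignment matrices (each row has exactly one entry 1),
  with the standing condition that every group size (column sum) lies in [1, M].\<close>
definition Mk :: "nat \<Rightarrow> nat \<Rightarrow> real \<Rightarrow> (nat \<Rightarrow> nat \<Rightarrow> real) set" where
  "Mk p k M = {m. (\<forall>i j. m i j = 0 \<or> m i j = 1)
               \<and> (\<forall>i j. (p \<le> i \<or> k \<le> j) \<longrightarrow> m i j = 0)
               \<and> (\<forall>i<p. card {j. j < k \<and> m i j = 1} = 1)
               \<and> (\<forall>j<k. 1 \<le> (\<Sum>i<p. m i j) \<and> (\<Sum>i<p. m i j) \<le> M)}"

definition sigma_x :: "'a measure \<Rightarrow> nat \<Rightarrow> ('a \<Rightarrow> nat \<Rightarrow> real) \<Rightarrow> 'a measure" where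
  "sigma_x Pr p x = vimage_algebra (space Pr) (\<lambda>\<omega>. restrict (x \<omega>) {..<p}) (PiM {..<p} (\<lambda>_. borel))"

definition lin_model ::
  "'a measure \<Rightarrow> nat \<Rightarrow> ('a \<Rightarrow> nat \<Rightarrow> real) \<Rightarrow> ('a \<Rightarrow> real) \<Rightarrow> ('a \<Rightarrow> real)
    \<Rightarrow> (nat \<Rightarrow> real) \<Rightarrow> real \<Rightarrow> real \<Rightarrow> real \<Rightarrow> bool" where
  "lin_model Pr p x \<epsilon> y \<beta> Cb B d \<longleftrightarrow>
     prob_space Pr
   \<and> (\<forall>i<p. (\<lambda>\<omega>. x \<omega> i) \<in> borel_measurable Pr)
   \<and> \<epsilon> \<in> borel_measurable Pr
   \<and> (\<forall>\<omega>\<in>space Pr. y \<omega> = rowdot p (x \<omega>) \<beta> + \<epsilon> \<omega>)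
   \<and> (\<forall>i<p. (\<integral>\<omega>. x \<omega> i \<partial>Pr) = 0)
   \<and> (\<forall>i<p. \<bar>\<beta> i\<bar> \<le> Cb)
   \<and> integrable Pr \<epsilon>
   \<and> (AE \<omega> in Pr. real_cond_exp Pr (sigma_x Pr p x) \<epsilon> \<omega> = 0)
   \<and> (AE \<omega> in Pr. nn_cond_exp Pr (sigma_x Pr p x) (\<lambda>\<omega>. ennreal (\<bar>\<epsilon> \<omega>\<bar> powr d)) \<omega> \<le> ennreal B)
   \<and> (\<forall>\<tau>. vnorm p \<tau> = 1 \<longrightarrow>
         (\<integral>\<^sup>+\<omega>. ennreal (\<bar>rowdot p (x \<omega>) \<tau>\<bar> powr d) \<partial>Pr) \<le> ennreal B
       \<and> ennreal (1 / B) \<le> (\<integral>\<^sup>+\<omega>. ennreal (\<bar>rowdot p (x \<omega>) \<tau>\<bar>\<^sup>2) \<partial>Pr))"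

definition Qo :: "'a measure \<Rightarrow> nat \<Rightarrow> ('a \<Rightarrow> nat \<Rightarrow> real) \<Rightarrow> ('a \<Rightarrow> real) \<Rightarrow> (nat \<Rightarrow> real) \<Rightarrow> real" where
  "Qo Pr p x y v = (\<integral>\<omega>. (y \<omega> - rowdot p (x \<omega>) v)\<^sup>2 \<partial>Pr) / real p"

definition Qt :: "'a measure \<Rightarrow> nat \<Rightarrow> ('a \<Rightarrow> nat \<Rightarrow> real) \<Rightarrow> ('a \<Rightarrow> real)
    \<Rightarrow> (nat \<Rightarrow> real) \<Rightarrow> (nat \<Rightarrow> real) \<Rightarrow> real" where
  "Qt Pr p x \<epsilon> w v =
     (\<Sum>i<p. \<Sum>j<p. (v i - w i) * (\<integral>\<omega>. x \<omega> i * x \<omega> j \<partial>Pr) * (v j - w j)) / real p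
     + (\<integral>\<omega>. (\<epsilon> \<omega>)\<^sup>2 \<partial>Pr) / real p"

end

theory Submission
  imports Defs
begin

text \<open>
  Write \<open>w = mo \<delta>o\<close> and \<open>b = \<beta> - w\<close>. Since \<open>y - x v = x b + x (w - v) + \<epsilon>\<close> and
  \<open>E[\<epsilon> | x] = 0\<close> kills every product of \<open>\<epsilon>\<close> with a linear form in \<open>x\<close>, the difference
  \<open>Qo(v) - Q~o(v)\<close> is \<open>(E[(x b)\<^sup>2] + 2 E[(x b)(x (w - v))]) / p\<close>. The moment bound
  \<open>E |x \<tau>|\<^sup>d \<le> B\<close> with \<open>d > 2\<close> gives \<open>E[(x u)(x u')] \<le> (1 + B) |u| |u'|\<close>, and since all
  coordinates of \<open>\<beta>\<close>, \<open>v\<close>, \<open>w\<close> are bounded, \<open>|b|\<close> and \<open>|w - v|\<close> are \<open>O(\<surd>p)\<close>; this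
  yields the bound \<open>O(|b| / \<surd>p)\<close>. Strict minimality at \<open>w\<close> follows from
  \<open>Q~o(v) - Q~o(w) = E[(x (v - w))\<^sup>2] / p \<ge> |v - w|\<^sup>2 / (B p)\<close>.
\<close>

lemma square_le_one_plus_abs_powr:
  fixes t d :: real
  assumes "2 \<le> d"
  shows "t\<^sup>2 \<le> 1 + \<bar>t\<bar> powr d"
proof (cases "\<bar>t\<bar> \<le> 1")
  case True
  then have "t\<^sup>2 \<le> 1" by (simp add: abs_square_le_1)
  then show ?thesis by (smt (verit) powr_ge_zero)
next
  case False
  then have "t\<^sup>2 = \<bar>t\<bar> powr 2" by simp
  also have "\<dots> \<le> \<bar>t\<bar> powr d" using False assms by (intro powr_mono) auto
  finally show ?thesis by simp
qed

lemma (in prob_space) square_integrable_of_abs_powr_moment: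
  assumes [measurable]: "f \<in> borel_measurable M"
    and "2 \<le> d" and "0 \<le> B"
    and moment: "(\<integral>\<^sup>+\<omega>. ennreal (\<bar>f \<omega>\<bar> powr d) \<partial>M) \<le> ennreal B"
  shows "integrable M (\<lambda>\<omega>. (f \<omega>)\<^sup>2)" and "(\<integral>\<omega>. (f \<omega>)\<^sup>2 \<partial>M) \<le> 1 + B"
proof -
  have "(\<integral>\<^sup>+\<omega>. ennreal ((f \<omega>)\<^sup>2) \<partial>M) \<le> (\<integral>\<^sup>+\<omega>. ennreal (1 + \<bar>f \<omega>\<bar> powr d) \<partial>M)"
    using square_le_one_plus_abs_powr[OF \<open>2 \<le> d\<close>] by (intro nn_integral_mono ennreal_leI)
  also have "\<dots> = 1 + (\<integral>\<^sup>+\<omega>. ennreal (\<bar>f \<omega>\<bar> powr d) \<partial>M)"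
    by (subst ennreal_plus) (auto simp: nn_integral_add emeasure_space_1)
  also have "\<dots> \<le> ennreal (1 + B)"
    using moment \<open>0 \<le> B\<close> by (simp add: add_left_mono)
  finally have le: "(\<integral>\<^sup>+\<omega>. ennreal ((f \<omega>)\<^sup>2) \<partial>M) \<le> ennreal (1 + B)" .
  then show int: "integrable M (\<lambda>\<omega>. (f \<omega>)\<^sup>2)"
    by (intro integrableI_nonneg) (auto simp: le_less_trans)
  have "ennreal (\<integral>\<omega>. (f \<omega>)\<^sup>2 \<partial>M) \<le> ennreal (1 + B)"
    using le by (subst nn_integral_eq_integral[symmetric]) (use int in auto)
  then show "(\<integral>\<omega>. (f \<omega>)\<^sup>2 \<partial>M) \<le> 1 + B"
    using \<open>0 \<le> B\<close> by (subst (asm) ennreal_le_iff) auto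
qed

lemma abs_mult_le_half_sum_squares:
  fixes a b :: real
  shows "\<bar>a * b\<bar> \<le> (a\<^sup>2 + b\<^sup>2) / 2"
  using sum_squares_bound[of "\<bar>a\<bar>" "\<bar>b\<bar>"] by (simp add: abs_mult)

lemma
  fixes f g :: "'a \<Rightarrow> real"
  assumes [measurable]: "f \<in> borel_measurable M" "g \<in> borel_measurable M"
    and f2: "integrable M (\<lambda>\<omega>. (f \<omega>)\<^sup>2)" and g2: "integrable M (\<lambda>\<omega>. (g \<omega>)\<^sup>2)"
  shows integrable_mult_of_square_integrable: "integrable M (\<lambda>\<omega>. f \<omega> * g \<omega>)"
    and abs_integral_mult_le_half_sum_squares:
      "\<bar>\<integral>\<omega>. f \<omega> * g \<omega> \<partial>M\<bar> \<le> ((\<integral>\<omega>. (f \<omega>)\<^sup>2 \<partial>M) + (\<integral>\<omega>. (g \<omega>)\<^sup>2 \<partial>M)) / 2"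
proof -
  have avg: "integrable M (\<lambda>\<omega>. ((f \<omega>)\<^sup>2 + (g \<omega>)\<^sup>2) / 2)"
    using f2 g2 by auto
  show int: "integrable M (\<lambda>\<omega>. f \<omega> * g \<omega>)"
    by (rule Bochner_Integration.integrable_bound[OF avg])
      (measurable, auto simp only: real_norm_def
        intro!: order_trans[OF abs_mult_le_half_sum_squares abs_ge_self])
  have "\<bar>\<integral>\<omega>. f \<omega> * g \<omega> \<partial>M\<bar> \<le> (\<integral>\<omega>. \<bar>f \<omega> * g \<omega>\<bar> \<partial>M)"
    by (rule integral_abs_bound)
  also have "\<dots> \<le> (\<integral>\<omega>. ((f \<omega>)\<^sup>2 + (g \<omega>)\<^sup>2) / 2 \<partial>M)"
    by (intro integral_mono int avg integrable_abs abs_mult_le_half_sum_squares)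
  also have "\<dots> = ((\<integral>\<omega>. (f \<omega>)\<^sup>2 \<partial>M) + (\<integral>\<omega>. (g \<omega>)\<^sup>2 \<partial>M)) / 2"
    using f2 g2 by simp
  finally show "\<bar>\<integral>\<omega>. f \<omega> * g \<omega> \<partial>M\<bar> \<le> ((\<integral>\<omega>. (f \<omega>)\<^sup>2 \<partial>M) + (\<integral>\<omega>. (g \<omega>)\<^sup>2 \<partial>M)) / 2" .
qed

lemma rowdot_diff: "rowdot p X (\<lambda>i. u i - v i) = rowdot p X u - rowdot p X v"
  unfolding rowdot_def by (simp add: algebra_simps sum_subtractf)

lemma rowdot_unit_vector: "i < p \<Longrightarrow> rowdot p X (\<lambda>j. if j = i then 1 else 0) = X i"
  unfolding rowdot_def by (simp add: if_distrib cong: if_cong)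

lemma vnorm_nonneg: "0 \<le> vnorm p u"
  unfolding vnorm_def by (simp add: sum_nonneg)

lemma vnorm_eq_0_iff: "vnorm p u = 0 \<longleftrightarrow> (\<forall>i<p. u i = 0)"
  unfolding vnorm_def by (auto simp: sum_nonneg_eq_0_iff)

lemma vnorm_normalize: "vnorm p u \<noteq> 0 \<Longrightarrow> vnorm p (\<lambda>i. u i / vnorm p u) = 1"
  unfolding vnorm_def
  by (simp add: power_divide sum_divide_distrib[symmetric] sum_nonneg)

text \<open>No case distinction is needed: for \<open>vnorm p u = 0\<close> the normalised vector is \<open>0\<close>
  by the convention \<open>a / 0 = 0\<close>, and so are both sides.\<close>
lemma rowdot_normalize: "rowdot p X u = vnorm p u * rowdot p X (\<lambda>i. u i / vnorm p u)"
proof (cases "vnorm p u = 0")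
  case True
  then show ?thesis by (simp add: vnorm_eq_0_iff rowdot_def)
next
  case False
  then show ?thesis by (simp add: rowdot_def sum_divide_distrib[symmetric])
qed

lemma vnorm_le_sqrt_mult:
  assumes "\<And>i. i < p \<Longrightarrow> \<bar>u i\<bar> \<le> c"
  shows "vnorm p u \<le> sqrt (real p) * c"
proof (cases "p = 0")
  case True
  then show ?thesis by (simp add: vnorm_def)
next
  case False
  then have "0 \<le> c" using assms[of 0] by auto
  have "(\<Sum>i<p. (u i)\<^sup>2) \<le> (\<Sum>i<p. c\<^sup>2)"
    using assms \<open>0 \<le> c\<close> by (intro sum_mono) (simp add: abs_le_square_iff[symmetric])
  then have "vnorm p u \<le> sqrt (real p * c\<^sup>2)"
    unfolding vnorm_def by simp
  also have "\<dots> = sqrt (real p) * c"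
    using \<open>0 \<le> c\<close> by (simp add: real_sqrt_mult)
  finally show ?thesis .
qed

lemma matvec_Mk_coordinate:
  assumes "m \<in> Mk p k M" and "i < p"
  shows "\<exists>j<k. matvec k m \<delta> i = \<delta> j"
proof -
  have "card {j. j < k \<and> m i j = 1} = 1" and binary: "\<And>j. m i j = 0 \<or> m i j = 1"
    using assms unfolding Mk_def by auto
  then obtain j0 where "{j. j < k \<and> m i j = 1} = {j0}"
    by (metis card_1_singletonE)
  then have "j0 < k" and "\<And>j. j < k \<Longrightarrow> m i j = (if j = j0 then 1 else 0)"
    using binary by (auto; metis)+
  then have "matvec k m \<delta> i = (\<Sum>j<k. if j = j0 then \<delta> j else 0)"
    unfolding matvec_def by (intro sum.cong) auto
  also have "\<dots> = \<delta> j0"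
    using \<open>j0 < k\<close> by simp
  finally have "matvec k m \<delta> i = \<delta> j0" .
  then show ?thesis using \<open>j0 < k\<close> by blast
qed

lemma abs_matvec_Mk_le:
  assumes "m \<in> Mk p k M" and "\<forall>j<k. \<bar>\<delta> j\<bar> \<le> c" and "i < p"
  shows "\<bar>matvec k m \<delta> i\<bar> \<le> c"
  using matvec_Mk_coordinate[OF assms(1,3), where \<delta> = \<delta>] assms(2) by auto

lemma matvec_Mk_eq_0: "m \<in> Mk p k M \<Longrightarrow> p \<le> i \<Longrightarrow> matvec k m \<delta> i = 0"
  unfolding Mk_def matvec_def by auto

lemma matvec_Mk_neq:
  assumes "m \<in> Mk p k M" and "m' \<in> Mk p k M" and "matvec k m \<delta> \<noteq> matvec k m' \<delta>'"
  shows "\<exists>i<p. matvec k m \<delta> i \<noteq> matvec k m' \<delta>' i"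
  using assms matvec_Mk_eq_0 by (metis ext not_less)

locale linear_model =
  fixes Pr :: "'a measure" and p :: nat and x :: "'a \<Rightarrow> nat \<Rightarrow> real" and \<epsilon> y :: "'a \<Rightarrow> real"
    and \<beta> :: "nat \<Rightarrow> real" and Cb B d :: real
  assumes model: "lin_model Pr p x \<epsilon> y \<beta> Cb B d" and d_gt_2: "2 < d" and B_pos: "0 < B"
begin

sublocale prob_space Pr
  using model unfolding lin_model_def by blast

lemma measurable_x_component [measurable]: "i < p \<Longrightarrow> (\<lambda>\<omega>. x \<omega> i) \<in> borel_measurable Pr"
  using model unfolding lin_model_def by blast

lemma measurable_eps [measurable]: "\<epsilon> \<in> borel_measurable Pr"
  using model unfolding lin_model_def by blast

lemma measurable_rowdot [measurable]: "(\<lambda>\<omega>. rowdot p (x \<omega>) u) \<in> borel_measurable Pr"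
  unfolding rowdot_def by (intro borel_measurable_sum) simp

lemma y_eq: "\<omega> \<in> space Pr \<Longrightarrow> y \<omega> = rowdot p (x \<omega>) \<beta> + \<epsilon> \<omega>"
  using model unfolding lin_model_def by blast

lemma abs_beta_le: "i < p \<Longrightarrow> \<bar>\<beta> i\<bar> \<le> Cb"
  using model unfolding lin_model_def by blast

lemma
  assumes "vnorm p \<tau> = 1"
  shows integrable_rowdot_unit_square: "integrable Pr (\<lambda>\<omega>. (rowdot p (x \<omega>) \<tau>)\<^sup>2)"
    and integral_rowdot_unit_square_le: "(\<integral>\<omega>. (rowdot p (x \<omega>) \<tau>)\<^sup>2 \<partial>Pr) \<le> 1 + B"
    and integral_rowdot_unit_square_ge: "1 / B \<le> (\<integral>\<omega>. (rowdot p (x \<omega>) \<tau>)\<^sup>2 \<partial>Pr)"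
proof -
  have moment: "(\<integral>\<^sup>+\<omega>. ennreal (\<bar>rowdot p (x \<omega>) \<tau>\<bar> powr d) \<partial>Pr) \<le> ennreal B"
    and lower: "ennreal (1 / B) \<le> (\<integral>\<^sup>+\<omega>. ennreal (\<bar>rowdot p (x \<omega>) \<tau>\<bar>\<^sup>2) \<partial>Pr)"
    using model assms unfolding lin_model_def by blast+
  show int: "integrable Pr (\<lambda>\<omega>. (rowdot p (x \<omega>) \<tau>)\<^sup>2)"
    and "(\<integral>\<omega>. (rowdot p (x \<omega>) \<tau>)\<^sup>2 \<partial>Pr) \<le> 1 + B"
    using square_integrable_of_abs_powr_moment[OF measurable_rowdot _ _ moment] d_gt_2 B_pos
    by auto
  have "ennreal (1 / B) \<le> ennreal (\<integral>\<omega>. (rowdot p (x \<omega>) \<tau>)\<^sup>2 \<partial>Pr)"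
    using lower by (subst nn_integral_eq_integral[symmetric]) (use int in auto)
  then show "1 / B \<le> (\<integral>\<omega>. (rowdot p (x \<omega>) \<tau>)\<^sup>2 \<partial>Pr)"
    by (subst (asm) ennreal_le_iff) auto
qed

lemma integral_rowdot_square_normalize:
  "(\<integral>\<omega>. (rowdot p (x \<omega>) u)\<^sup>2 \<partial>Pr)
     = (vnorm p u)\<^sup>2 * (\<integral>\<omega>. (rowdot p (x \<omega>) (\<lambda>i. u i / vnorm p u))\<^sup>2 \<partial>Pr)"
  by (subst rowdot_normalize) (simp add: power_mult_distrib)

lemma integrable_rowdot_square: "integrable Pr (\<lambda>\<omega>. (rowdot p (x \<omega>) u)\<^sup>2)"
proof (cases "vnorm p u = 0")
  case False
  then show ?thesis
    by (subst rowdot_normalize)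
      (simp add: power_mult_distrib vnorm_normalize integrable_rowdot_unit_square)
qed (subst rowdot_normalize, simp)

lemma integral_rowdot_square_le: "(\<integral>\<omega>. (rowdot p (x \<omega>) u)\<^sup>2 \<partial>Pr) \<le> (1 + B) * (vnorm p u)\<^sup>2"
proof (cases "vnorm p u = 0")
  case False
  then show ?thesis
    using integral_rowdot_unit_square_le[OF vnorm_normalize]
    by (subst integral_rowdot_square_normalize) (simp add: mult.commute)
qed (subst integral_rowdot_square_normalize, simp)

lemma integral_rowdot_square_ge: "(vnorm p u)\<^sup>2 / B \<le> (\<integral>\<omega>. (rowdot p (x \<omega>) u)\<^sup>2 \<partial>Pr)"
proof (cases "vnorm p u = 0")
  case False
  then show ?thesis
    using integral_rowdot_unit_square_ge[OF vnorm_normalize]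
    by (subst integral_rowdot_square_normalize) (simp add: divide_inverse)
qed (simp add: integral_nonneg)


lemma integrable_rowdot_mult: "integrable Pr (\<lambda>\<omega>. rowdot p (x \<omega>) u * rowdot p (x \<omega>) v)"
  by (intro integrable_mult_of_square_integrable measurable_rowdot integrable_rowdot_square)

lemma integral_rowdot_normalize_square_le:
  "(\<integral>\<omega>. (rowdot p (x \<omega>) (\<lambda>i. u i / vnorm p u))\<^sup>2 \<partial>Pr) \<le> 1 + B"
proof (cases "vnorm p u = 0")
  case True
  then show ?thesis using B_pos by (simp add: rowdot_def)
qed (rule integral_rowdot_unit_square_le[OF vnorm_normalize])

lemma abs_integral_rowdot_mult_le:
  "\<bar>\<integral>\<omega>. rowdot p (x \<omega>) u * rowdot p (x \<omega>) v \<partial>Pr\<bar> \<le> (1 + B) * vnorm p u * vnorm p v"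
proof -
  define \<tau> where "\<tau> = (\<lambda>i. u i / vnorm p u)"
  define \<sigma> where "\<sigma> = (\<lambda>i. v i / vnorm p v)"
  have "\<And>X. rowdot p X u = vnorm p u * rowdot p X \<tau>" "\<And>X. rowdot p X v = vnorm p v * rowdot p X \<sigma>"
    unfolding \<tau>_def \<sigma>_def by (rule rowdot_normalize)+
  then have "\<bar>\<integral>\<omega>. rowdot p (x \<omega>) u * rowdot p (x \<omega>) v \<partial>Pr\<bar>
      = vnorm p u * vnorm p v * \<bar>\<integral>\<omega>. rowdot p (x \<omega>) \<tau> * rowdot p (x \<omega>) \<sigma> \<partial>Pr\<bar>"
    by (simp add: abs_mult vnorm_nonneg ac_simps)
  also have "\<dots> \<le> vnorm p u * vnorm p v *
      (((\<integral>\<omega>. (rowdot p (x \<omega>) \<tau>)\<^sup>2 \<partial>Pr) + (\<integral>\<omega>. (rowdot p (x \<omega>) \<sigma>)\<^sup>2 \<partial>Pr)) / 2)"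
    by (intro mult_left_mono abs_integral_mult_le_half_sum_squares measurable_rowdot
        integrable_rowdot_square) (simp add: vnorm_nonneg)
  also have "\<dots> \<le> vnorm p u * vnorm p v * (1 + B)"
    using integral_rowdot_normalize_square_le[of u] integral_rowdot_normalize_square_le[of v]
    unfolding \<tau>_def \<sigma>_def by (intro mult_left_mono) (auto simp: vnorm_nonneg)
  finally show ?thesis by (simp add: ac_simps)
qed

lemma measurable_restrict_x: "(\<lambda>\<omega>. restrict (x \<omega>) {..<p}) \<in> Pr \<rightarrow>\<^sub>M PiM {..<p} (\<lambda>_. borel)"
  by (rule measurable_restrict) simp

lemma restrict_x_funcset: "(\<lambda>\<omega>. restrict (x \<omega>) {..<p}) \<in> space Pr \<rightarrow> space (PiM {..<p} (\<lambda>_. borel))"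
  using measurable_space[OF measurable_restrict_x] by (rule funcsetI)

lemma subalgebra_sigma_x: "subalgebra Pr (sigma_x Pr p x)"
  unfolding subalgebra_def sigma_x_def
  using sets_vimage_algebra2[OF restrict_x_funcset] measurable_sets[OF measurable_restrict_x]
  by auto

sublocale x_algebra: finite_measure_subalgebra Pr "sigma_x Pr p x"
  by unfold_locales (rule subalgebra_sigma_x)

lemma measurable_rowdot_sigma_x: "(\<lambda>\<omega>. rowdot p (x \<omega>) u) \<in> borel_measurable (sigma_x Pr p x)"
proof -
  have "(\<lambda>\<omega>. restrict (x \<omega>) {..<p}) \<in> sigma_x Pr p x \<rightarrow>\<^sub>M PiM {..<p} (\<lambda>_. borel)"
    unfolding sigma_x_def by (rule measurable_vimage_algebra1[OF restrict_x_funcset])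
  then have "(\<lambda>\<omega>. restrict (x \<omega>) {..<p} i) \<in> borel_measurable (sigma_x Pr p x)" if "i < p" for i
    by (rule measurable_compose[OF _ measurable_component_singleton]) (use that in auto)
  then have "(\<lambda>\<omega>. x \<omega> i) \<in> borel_measurable (sigma_x Pr p x)" if "i < p" for i
    using that by simp
  then show ?thesis
    unfolding rowdot_def by (intro borel_measurable_sum borel_measurable_times) auto
qed

lemma nn_integral_abs_eps_powr_le: "(\<integral>\<^sup>+\<omega>. ennreal (\<bar>\<epsilon> \<omega>\<bar> powr d) \<partial>Pr) \<le> ennreal B"
proof -
  have "AE \<omega> in Pr. nn_cond_exp Pr (sigma_x Pr p x) (\<lambda>\<omega>. ennreal (\<bar>\<epsilon> \<omega>\<bar> powr d)) \<omega> \<le> ennreal B"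
    using model unfolding lin_model_def by blast
  then have "(\<integral>\<^sup>+\<omega>. nn_cond_exp Pr (sigma_x Pr p x) (\<lambda>\<omega>. ennreal (\<bar>\<epsilon> \<omega>\<bar> powr d)) \<omega> \<partial>Pr) \<le> ennreal B"
    by (auto intro: order_trans[OF nn_integral_mono_AE] simp: emeasure_space_1)
  then show ?thesis
    using x_algebra.nn_cond_exp_intg[of "\<lambda>_. 1" "\<lambda>\<omega>. ennreal (\<bar>\<epsilon> \<omega>\<bar> powr d)"] by simp
qed

lemma integrable_eps_square: "integrable Pr (\<lambda>\<omega>. (\<epsilon> \<omega>)\<^sup>2)"
  using square_integrable_of_abs_powr_moment[OF measurable_eps _ _ nn_integral_abs_eps_powr_le]
    d_gt_2 B_pos by simp

lemma integrable_rowdot_mult_eps: "integrable Pr (\<lambda>\<omega>. rowdot p (x \<omega>) u * \<epsilon> \<omega>)"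
  by (intro integrable_mult_of_square_integrable measurable_rowdot measurable_eps
      integrable_rowdot_square integrable_eps_square)

lemma integral_rowdot_mult_eps: "(\<integral>\<omega>. rowdot p (x \<omega>) u * \<epsilon> \<omega> \<partial>Pr) = 0"
proof -
  have "AE \<omega> in Pr. real_cond_exp Pr (sigma_x Pr p x) \<epsilon> \<omega> = 0"
    using model unfolding lin_model_def by blast
  then have "(\<integral>\<omega>. rowdot p (x \<omega>) u * real_cond_exp Pr (sigma_x Pr p x) \<epsilon> \<omega> \<partial>Pr) = (\<integral>\<omega>. 0 \<partial>Pr)"
    by (intro integral_cong_AE) auto
  then show ?thesis
    by (simp add: x_algebra.real_cond_exp_intg(2) integrable_rowdot_mult_eps measurable_rowdot_sigma_x)
qed

lemma integrable_x_mult: "i < p \<Longrightarrow> j < p \<Longrightarrow> integrable Pr (\<lambda>\<omega>. x \<omega> i * x \<omega> j)"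
  using integrable_rowdot_mult[of "\<lambda>l. if l = i then 1 else 0" "\<lambda>l. if l = j then 1 else 0"]
  by (simp add: rowdot_unit_vector)

lemma integral_rowdot_mult_rowdot:
  "(\<integral>\<omega>. rowdot p (x \<omega>) u * rowdot p (x \<omega>) v \<partial>Pr)
     = (\<Sum>i<p. \<Sum>j<p. u i * (\<integral>\<omega>. x \<omega> i * x \<omega> j \<partial>Pr) * v j)"
proof -
  have "(\<integral>\<omega>. rowdot p (x \<omega>) u * rowdot p (x \<omega>) v \<partial>Pr)
      = (\<integral>\<omega>. (\<Sum>i<p. \<Sum>j<p. u i * v j * (x \<omega> i * x \<omega> j)) \<partial>Pr)"
    unfolding rowdot_def by (simp add: sum_product algebra_simps)
  also have "\<dots> = (\<Sum>i<p. \<integral>\<omega>. (\<Sum>j<p. u i * v j * (x \<omega> i * x \<omega> j)) \<partial>Pr)"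
    by (rule Bochner_Integration.integral_sum)
      (auto intro!: integrable_sum integrable_x_mult)
  also have "\<dots> = (\<Sum>i<p. \<Sum>j<p. \<integral>\<omega>. u i * v j * (x \<omega> i * x \<omega> j) \<partial>Pr)"
    by (intro sum.cong refl Bochner_Integration.integral_sum)
      (auto intro!: integrable_x_mult)
  also have "\<dots> = (\<Sum>i<p. \<Sum>j<p. u i * v j * (\<integral>\<omega>. x \<omega> i * x \<omega> j \<partial>Pr))"
    by simp
  finally show ?thesis by (simp add: ac_simps)
qed

lemma Qo_eq: "Qo Pr p x y v = ((\<integral>\<omega>. (rowdot p (x \<omega>) (\<lambda>i. \<beta> i - v i))\<^sup>2 \<partial>Pr) + (\<integral>\<omega>. (\<epsilon> \<omega>)\<^sup>2 \<partial>Pr)) / p"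
proof -
  let ?r = "\<lambda>\<omega>. rowdot p (x \<omega>) (\<lambda>i. \<beta> i - v i)"
  have "(y \<omega> - rowdot p (x \<omega>) v)\<^sup>2 = (?r \<omega>)\<^sup>2 + 2 * (?r \<omega> * \<epsilon> \<omega>) + (\<epsilon> \<omega>)\<^sup>2"
    if "\<omega> \<in> space Pr" for \<omega>
    using that by (simp add: y_eq rowdot_diff power2_eq_square algebra_simps)
  then have "(\<integral>\<omega>. (y \<omega> - rowdot p (x \<omega>) v)\<^sup>2 \<partial>Pr)
      = (\<integral>\<omega>. (?r \<omega>)\<^sup>2 + 2 * (?r \<omega> * \<epsilon> \<omega>) + (\<epsilon> \<omega>)\<^sup>2 \<partial>Pr)"
    by (rule Bochner_Integration.integral_cong[OF refl])
  also have "\<dots> = (\<integral>\<omega>. (?r \<omega>)\<^sup>2 \<partial>Pr) + (\<integral>\<omega>. (\<epsilon> \<omega>)\<^sup>2 \<partial>Pr)"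
    by (simp add: integrable_rowdot_square integrable_rowdot_mult_eps integrable_eps_square
        integral_rowdot_mult_eps)
  finally show ?thesis unfolding Qo_def by simp
qed

lemma Qt_eq: "Qt Pr p x \<epsilon> w v = ((\<integral>\<omega>. (rowdot p (x \<omega>) (\<lambda>i. v i - w i))\<^sup>2 \<partial>Pr) + (\<integral>\<omega>. (\<epsilon> \<omega>)\<^sup>2 \<partial>Pr)) / p"
  unfolding Qt_def power2_eq_square integral_rowdot_mult_rowdot by (simp add: add_divide_distrib)

lemma Qo_minus_Qt:
  "Qo Pr p x y v - Qt Pr p x \<epsilon> w v
     = ((\<integral>\<omega>. (rowdot p (x \<omega>) (\<lambda>i. \<beta> i - w i))\<^sup>2 \<partial>Pr)
        + 2 * (\<integral>\<omega>. rowdot p (x \<omega>) (\<lambda>i. \<beta> i - w i) * rowdot p (x \<omega>) (\<lambda>i. w i - v i) \<partial>Pr)) / p"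
proof -
  let ?a = "\<lambda>\<omega>. rowdot p (x \<omega>) (\<lambda>i. \<beta> i - w i)" and ?c = "\<lambda>\<omega>. rowdot p (x \<omega>) (\<lambda>i. w i - v i)"
  have "(rowdot p (x \<omega>) (\<lambda>i. \<beta> i - v i))\<^sup>2
      = (?a \<omega>)\<^sup>2 + 2 * (?a \<omega> * ?c \<omega>) + (rowdot p (x \<omega>) (\<lambda>i. v i - w i))\<^sup>2" for \<omega>
    by (simp add: rowdot_diff power2_eq_square algebra_simps)
  then have "(\<integral>\<omega>. (rowdot p (x \<omega>) (\<lambda>i. \<beta> i - v i))\<^sup>2 \<partial>Pr)
      = (\<integral>\<omega>. (?a \<omega>)\<^sup>2 \<partial>Pr) + 2 * (\<integral>\<omega>. ?a \<omega> * ?c \<omega> \<partial>Pr)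
        + (\<integral>\<omega>. (rowdot p (x \<omega>) (\<lambda>i. v i - w i))\<^sup>2 \<partial>Pr)"
    by (simp add: integrable_rowdot_square integrable_rowdot_mult)
  then show ?thesis
    unfolding Qo_eq Qt_eq by (simp add: diff_divide_distrib[symmetric])
qed

lemma abs_Qo_minus_Qt_le:
  "\<bar>Qo Pr p x y v - Qt Pr p x \<epsilon> w v\<bar>
     \<le> (1 + B) * vnorm p (\<lambda>i. \<beta> i - w i)
        * (vnorm p (\<lambda>i. \<beta> i - w i) + 2 * vnorm p (\<lambda>i. w i - v i)) / p"
proof -
  let ?a = "\<lambda>i. \<beta> i - w i" and ?c = "\<lambda>i. w i - v i"
  have "0 \<le> (\<integral>\<omega>. (rowdot p (x \<omega>) ?a)\<^sup>2 \<partial>Pr)"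
    by (simp add: integral_nonneg)
  then have "\<bar>(\<integral>\<omega>. (rowdot p (x \<omega>) ?a)\<^sup>2 \<partial>Pr)
              + 2 * (\<integral>\<omega>. rowdot p (x \<omega>) ?a * rowdot p (x \<omega>) ?c \<partial>Pr)\<bar>
      \<le> (1 + B) * (vnorm p ?a)\<^sup>2 + 2 * ((1 + B) * vnorm p ?a * vnorm p ?c)"
    using integral_rowdot_square_le[of ?a] abs_integral_rowdot_mult_le[of ?a ?c] by linarith
  then show ?thesis
    unfolding Qo_minus_Qt by (simp add: divide_right_mono power2_eq_square algebra_simps)
qed

lemma abs_Qo_minus_Qt_le_cube:
  assumes "\<And>i. i < p \<Longrightarrow> \<bar>v i\<bar> \<le> c" and "\<And>i. i < p \<Longrightarrow> \<bar>w i\<bar> \<le> c"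
  shows "\<bar>Qo Pr p x y v - Qt Pr p x \<epsilon> w v\<bar>
           \<le> (1 + B) * (Cb + 5 * c) * vnorm p (\<lambda>i. \<beta> i - w i) / sqrt p"
proof -
  let ?nb = "vnorm p (\<lambda>i. \<beta> i - w i)" and ?nc = "vnorm p (\<lambda>i. w i - v i)"
  have "?nb \<le> sqrt p * (Cb + c)"
    using abs_beta_le assms(2) by (intro vnorm_le_sqrt_mult) (smt (verit))
  moreover have "?nc \<le> sqrt p * (2 * c)"
    using assms by (intro vnorm_le_sqrt_mult) (smt (verit))
  ultimately have "?nb + 2 * ?nc \<le> sqrt p * (Cb + 5 * c)"
    by (simp add: algebra_simps)
  then have "(1 + B) * ?nb * (?nb + 2 * ?nc) / p \<le> (1 + B) * ?nb * (sqrt p * (Cb + 5 * c)) / p"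
    using B_pos by (intro divide_right_mono mult_left_mono) (auto simp: vnorm_nonneg)
  also have "\<dots> = (1 + B) * (Cb + 5 * c) * ?nb * (sqrt p / p)"
    by simp
  also have "sqrt p / p = 1 / sqrt p"
    using real_div_sqrt[of p] by (cases "p = 0") (auto simp: field_simps)
  finally show ?thesis
    using abs_Qo_minus_Qt_le order_trans by fastforce
qed

lemma Qt_self_less:
  assumes "i < p" and "v i \<noteq> w i"
  shows "Qt Pr p x \<epsilon> w w < Qt Pr p x \<epsilon> w v"
proof -
  have "0 < vnorm p (\<lambda>i. v i - w i)"
    using assms vnorm_nonneg vnorm_eq_0_iff by (metis eq_iff_diff_eq_0 order_neq_le_trans)
  then have "0 < (vnorm p (\<lambda>i. v i - w i))\<^sup>2 / B"
    using B_pos by simp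
  also have "\<dots> \<le> (\<integral>\<omega>. (rowdot p (x \<omega>) (\<lambda>i. v i - w i))\<^sup>2 \<partial>Pr)"
    by (rule integral_rowdot_square_ge)
  finally show ?thesis
    using assms(1) by (simp add: Qt_eq rowdot_def divide_strict_right_mono)
qed

end

theorem theorem1:
  fixes Cb B d M C\<Delta> :: real
  assumes "0 < Cb" and "0 < B" and "2 < d" and "0 \<le> C\<Delta>"
  shows "\<exists>C. \<forall>(Pr :: 'a measure) p k \<Delta> x \<epsilon> y \<beta> mo \<delta>o.
           ( lin_model Pr p x \<epsilon> y \<beta> Cb B d
           \<and> 1 \<le> k \<and> k \<le> p
           \<and> (\<forall>\<delta>\<in>\<Delta>. \<forall>j<k. \<bar>\<delta> j\<bar> \<le> C\<Delta>)
           \<and> mo \<in> Mk p k M \<and> \<delta>o \<in> \<Delta>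
           \<and> (\<forall>m\<in>Mk p k M. \<forall>\<delta>\<in>\<Delta>.
                 (\<Sum>i<p. (matvec k mo \<delta>o i - \<beta> i)\<^sup>2) \<le> (\<Sum>i<p. (matvec k m \<delta> i - \<beta> i)\<^sup>2)) )
           \<longrightarrow>
           (\<forall>m\<in>Mk p k M. \<forall>\<delta>\<in>\<Delta>.
               \<bar>Qo Pr p x y (matvec k m \<delta>) - Qt Pr p x \<epsilon> (matvec k mo \<delta>o) (matvec k m \<delta>)\<bar>
                 \<le> C * vnorm p (\<lambda>i. \<beta> i - matvec k mo \<delta>o i) / sqrt (real p))
         \<and> (\<forall>m\<in>Mk p k M. \<forall>\<delta>\<in>\<Delta>. matvec k m \<delta> \<noteq> matvec k mo \<delta>o \<longrightarrow>
               Qt Pr p x \<epsilon> (matvec k mo \<delta>o) (matvec k mo \<delta>o)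
                 < Qt Pr p x \<epsilon> (matvec k mo \<delta>o) (matvec k m \<delta>))"
proof (intro exI[of _ "(1 + B) * (Cb + 5 * C\<Delta>)"] allI impI conjI; elim conjE)
  fix Pr :: "'a measure" and p k \<Delta> x \<epsilon> y \<beta> mo \<delta>o
  assume model: "lin_model Pr p x \<epsilon> y \<beta> Cb B d"
    and \<Delta>_bounded: "\<forall>\<delta>\<in>\<Delta>. \<forall>j<k. \<bar>\<delta> j\<bar> \<le> C\<Delta>"
    and mo: "mo \<in> Mk p k M" and \<delta>o: "\<delta>o \<in> \<Delta>"
  interpret linear_model Pr p x \<epsilon> y \<beta> Cb B d
    using model assms by unfold_locales
  show "\<forall>m\<in>Mk p k M. \<forall>\<delta>\<in>\<Delta>.
          \<bar>Qo Pr p x y (matvec k m \<delta>) - Qt Pr p x \<epsilon> (matvec k mo \<delta>o) (matvec k m \<delta>)\<bar>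
            \<le> (1 + B) * (Cb + 5 * C\<Delta>) * vnorm p (\<lambda>i. \<beta> i - matvec k mo \<delta>o i) / sqrt (real p)"
    using mo \<delta>o \<Delta>_bounded by (blast intro: abs_Qo_minus_Qt_le_cube abs_matvec_Mk_le)
  show "\<forall>m\<in>Mk p k M. \<forall>\<delta>\<in>\<Delta>. matvec k m \<delta> \<noteq> matvec k mo \<delta>o \<longrightarrow>
          Qt Pr p x \<epsilon> (matvec k mo \<delta>o) (matvec k mo \<delta>o)
            < Qt Pr p x \<epsilon> (matvec k mo \<delta>o) (matvec k m \<delta>)"
    using mo by (blast dest: matvec_Mk_neq intro: Qt_self_less)
qed

end
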